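(* Let $\mathfrak{S}=(\mathcal{X},\mathsf{S},\gamma,(\Lambda_{a})_{a\in\mathcal{A}})$ be a spectral decomposition system for the Euclidean space $\mathfrak{H}$ with spectral-induced ordering mapping $\tau$. Then: (i) $\tau\circ\gamma=\gamma$ and, for every $a\in\mathcal{A}$, $\gamma\circ\Lambda_a\circ\gamma=\gamma$; (ii) the range of $\gamma$ equals the range of $\tau$ and is a closed convex cone in $\mathcal{X}$; (iii) for all $X\in\mathfrak{H}$ and $a\in\mathcal{A}$, $\|X\|=\|\Lambda_a\gamma(X)\|=\|\gamma(X)\|$; (iv) $\|\gamma(X)-\gamma(Y)\|\leq\|X-Y\|$ for all $X,Y\in\mathfrak{H}$; (v) $\gamma(\alpha X)=\alpha\gamma(X)$ for all $X\in\mathfrak{H}$ and $\alpha\in[0,+\infty)$; (vi) $\gamma(-X)\in-\mathsf{S}\cdot\gamma(X)$ for all $X\in\mathfrak{H}$.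
   Context: A Euclidean space is a finite-dimensional real inner product space; inner products are written $\langle\cdot,\cdot\rangle$ and norms $\|\cdot\|$. Let $\mathfrak{H}$ and $\mathcal{X}$ be Euclidean spaces, let $\mathsf{S}$ be a group acting on $\mathcal{X}$ by linear isometries, let $\gamma\colon\mathfrak{H}\to\mathcal{X}$, and let $(\Lambda_a)_{a\in\mathcal{A}}$ be a family of linear operators from $\mathcal{X}$ to $\mathfrak{H}$. The orbit of $x$ is $\mathsf{S}\cdot x=\{s\cdot x: s\in\mathsf{S}\}$, and $-\mathsf{S}\cdot x=\{-s\cdot x: s\in\mathsf{S}\}$; a map $f$ on $\mathcal{X}$ is $\mathsf{S}$-invariant if $f(s\cdot x)=f(x)$ for all $s,x$. The tuple is a spectral decomposition system for $\mathfrak{H}$ if: [A] every $\Lambda_a$ is an isometry; [B] there exists an $\mathsf{S}$-invariant $\tau\colon\mathcal{X}\to\mathcal{X}$ with $\tau(x)\in\mathsf{S}\cdot x$ for all $x$ and $\gamma\circ\Lambda_a=\tau$ for all $a$; [C] for every $X\in\mathfrak{H}$ there is $a$ with $X=\Lambda_a\gamma(X)$; [D] $\langle X,Y\rangle\leq\langle\gamma(X),\gamma(Y)\rangle$ for all $X,Y\in\mathfrak{H}$. The map $\tau$ in [B] is the spectral-induced ordering mapping. *)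

theory Defs
  imports "HOL-Analysis.Analysis" "HOL-Algebra.Group_Action"
begin

definition linear_isometric_action :: "('s, 'm) monoid_scheme \<Rightarrow> ('s \<Rightarrow> 'x::euclidean_space \<Rightarrow> 'x) \<Rightarrow> bool" where
  "linear_isometric_action G act \<longleftrightarrow>
     group_action G (UNIV :: 'x set) act \<and>
     (\<forall>s\<in>carrier G. linear (act s) \<and> (\<forall>x. norm (act s x) = norm x))"

definition spectral_ordering_map ::
  "('s, 'm) monoid_scheme \<Rightarrow> ('s \<Rightarrow> 'x::euclidean_space \<Rightarrow> 'x) \<Rightarrow> ('h::euclidean_space \<Rightarrow> 'x)
   \<Rightarrow> 'a set \<Rightarrow> ('a \<Rightarrow> 'x \<Rightarrow> 'h) \<Rightarrow> ('x \<Rightarrow> 'x) \<Rightarrow> bool" where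
  "spectral_ordering_map G act \<gamma> A \<Lambda> \<tau> \<longleftrightarrow>
     (\<forall>s\<in>carrier G. \<forall>x. \<tau> (act s x) = \<tau> x) \<and>
     (\<forall>x. \<tau> x \<in> orbit G act x) \<and>
     (\<forall>a\<in>A. \<gamma> \<circ> \<Lambda> a = \<tau>)"

definition spectral_decomposition_system ::
  "('s, 'm) monoid_scheme \<Rightarrow> ('s \<Rightarrow> 'x::euclidean_space \<Rightarrow> 'x) \<Rightarrow> ('h::euclidean_space \<Rightarrow> 'x)
   \<Rightarrow> 'a set \<Rightarrow> ('a \<Rightarrow> 'x \<Rightarrow> 'h) \<Rightarrow> bool" where
  "spectral_decomposition_system G act \<gamma> A \<Lambda> \<longleftrightarrow>
     linear_isometric_action G act \<and>
     (\<forall>a\<in>A. linear (\<Lambda> a) \<and> (\<forall>x. norm (\<Lambda> a x) = norm x)) \<and>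
     (\<exists>\<tau>. spectral_ordering_map G act \<gamma> A \<Lambda> \<tau>) \<and>
     (\<forall>X. \<exists>a\<in>A. X = \<Lambda> a (\<gamma> X)) \<and>
     (\<forall>X Y. inner X Y \<le> inner (\<gamma> X) (\<gamma> Y))"

end

theory Submission
  imports Defs
begin

text \<open>
  Condition [D] together with the isometries \<open>\<Lambda>\<^sub>a\<close> shows that every spectral vector
  \<open>\<gamma> X\<close> satisfies \<open>\<langle>\<gamma> X, y\<rangle> \<le> \<langle>\<gamma> X, \<tau> y\<rangle>\<close> for all \<open>y\<close>. The set \<open>K\<close> of all vectors with
  this property is an intersection of closed half-spaces through the origin, hence a closed
  convex cone; and since \<open>\<tau>\<close> preserves norms, every \<open>u \<in> K\<close> is a fixed point of \<open>\<tau>\<close>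
  (take \<open>y = u\<close>), so \<open>u = \<tau> u = \<gamma> (\<Lambda>\<^sub>a u)\<close> is itself spectral. Thus the range of \<open>\<gamma>\<close> is
  exactly \<open>K\<close>, and positive homogeneity of \<open>\<gamma>\<close> follows from \<open>\<gamma> (\<alpha> X) = \<tau> (\<alpha> \<gamma> X)\<close>.
  The nonexpansiveness of \<open>\<gamma>\<close> is [D] rewritten by the polarization identity.
\<close>

lemma linear_norm_preserving_inner:
  assumes "linear f" "\<And>x. norm (f x) = norm x"
  shows "inner (f x) (f y) = inner x y"
proof -
  have "norm (f x + f y) = norm (x + y)"
    using assms by (metis linear_add)
  then show ?thesis
    using assms(2) by (simp add: dot_norm)
qed

lemma eq_of_norm_eq_of_inner_le:
  fixes u v :: "'a::real_inner"
  assumes "norm v = norm u" "inner u u \<le> inner u v"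
  shows "v = u"
proof -
  have "(norm (u - v))\<^sup>2 = inner u u - 2 * inner u v + inner v v"
    by (simp add: power2_norm_eq_inner inner_diff_left inner_diff_right inner_commute)
  also have "inner v v = inner u u"
    using assms(1) by (metis power2_norm_eq_inner)
  finally have "(norm (u - v))\<^sup>2 \<le> 0"
    using assms(2) by linarith
  then show ?thesis by simp
qed

lemma norm_diff_le_of_inner_le:
  fixes x y :: "'a::real_inner" and u v :: "'b::real_inner"
  assumes "norm u = norm x" "norm v = norm y" "inner x y \<le> inner u v"
  shows "norm (u - v) \<le> norm (x - y)"
proof -
  have "(norm (u - v))\<^sup>2 \<le> (norm (x - y))\<^sup>2"
    using assms dot_norm_neg[of x y] dot_norm_neg[of u v] by simp
  then show ?thesis by (rule power2_le_imp_le) simp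
qed

locale spectral_decomposition =
  fixes G :: "('s, 'm) monoid_scheme"
    and act :: "'s \<Rightarrow> 'x::euclidean_space \<Rightarrow> 'x"
    and \<gamma> :: "'h::euclidean_space \<Rightarrow> 'x"
    and A :: "'a set"
    and \<Lambda> :: "'a \<Rightarrow> 'x \<Rightarrow> 'h"
    and \<tau> :: "'x \<Rightarrow> 'x"
  assumes system: "spectral_decomposition_system G act \<gamma> A \<Lambda>"
    and ordering: "spectral_ordering_map G act \<gamma> A \<Lambda> \<tau>"
begin

lemma act_linear: "s \<in> carrier G \<Longrightarrow> linear (act s)"
  and norm_act: "s \<in> carrier G \<Longrightarrow> norm (act s x) = norm x"
  and \<Lambda>_linear: "a \<in> A \<Longrightarrow> linear (\<Lambda> a)"
  and norm_\<Lambda>: "a \<in> A \<Longrightarrow> norm (\<Lambda> a x) = norm x"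
  and decomposition: "\<exists>a\<in>A. X = \<Lambda> a (\<gamma> X)"
  and inner_le_inner_\<gamma>: "inner X Y \<le> inner (\<gamma> X) (\<gamma> Y)"
  using system
  unfolding spectral_decomposition_system_def linear_isometric_action_def by auto

lemma \<tau>_in_orbit: "\<tau> x \<in> orbit G act x"
  and \<gamma>_\<Lambda>: "a \<in> A \<Longrightarrow> \<gamma> (\<Lambda> a x) = \<tau> x"
  using ordering unfolding spectral_ordering_map_def by (auto simp: fun_eq_iff)

lemma norm_\<tau>: "norm (\<tau> x) = norm x"
  using \<tau>_in_orbit[of x] norm_act unfolding orbit_def by auto

lemma inner_\<Lambda>: "a \<in> A \<Longrightarrow> inner (\<Lambda> a x) (\<Lambda> a y) = inner x y"
  by (rule linear_norm_preserving_inner[OF \<Lambda>_linear norm_\<Lambda>])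

lemma \<tau>_\<gamma>: "\<tau> (\<gamma> X) = \<gamma> X"
  using decomposition[of X] \<gamma>_\<Lambda> by metis

lemma \<gamma>_\<Lambda>_\<gamma>: "a \<in> A \<Longrightarrow> \<gamma> (\<Lambda> a (\<gamma> X)) = \<gamma> X"
  by (simp add: \<gamma>_\<Lambda> \<tau>_\<gamma>)

lemma norm_\<gamma>: "norm (\<gamma> X) = norm X"
  using decomposition[of X] norm_\<Lambda> by metis

lemma range_\<gamma>_eq_range_\<tau>: "range \<gamma> = range \<tau>"
proof -
  obtain a where "a \<in> A"
    using decomposition by blast
  then show ?thesis
    using \<tau>_\<gamma> \<gamma>_\<Lambda> by (metis image_subsetI rangeI subset_antisym)
qed

definition spectral_cone :: "'x set" where
  "spectral_cone = {u. \<forall>y. inner u y \<le> inner u (\<tau> y)}"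

lemma \<gamma>_in_spectral_cone: "\<gamma> X \<in> spectral_cone"
  unfolding spectral_cone_def
proof (intro CollectI allI)
  fix y
  obtain a where a: "a \<in> A" "X = \<Lambda> a (\<gamma> X)"
    using decomposition by blast
  have "inner (\<gamma> X) y = inner X (\<Lambda> a y)"
    using inner_\<Lambda>[OF a(1)] a(2) by metis
  also have "\<dots> \<le> inner (\<gamma> X) (\<gamma> (\<Lambda> a y))"
    by (rule inner_le_inner_\<gamma>)
  finally show "inner (\<gamma> X) y \<le> inner (\<gamma> X) (\<tau> y)"
    using \<gamma>_\<Lambda>[OF a(1)] by simp
qed

lemma \<tau>_fixes_spectral_cone: "u \<in> spectral_cone \<Longrightarrow> \<tau> u = u"
  unfolding spectral_cone_def by (blast intro: eq_of_norm_eq_of_inner_le norm_\<tau>)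

lemma range_\<gamma>_eq_spectral_cone: "range \<gamma> = spectral_cone"
  using \<gamma>_in_spectral_cone \<tau>_fixes_spectral_cone range_\<gamma>_eq_range_\<tau>
  by (metis image_subsetI rangeI subsetI subset_antisym)

lemma spectral_cone_eq_Inter_halfspaces:
  "spectral_cone = (\<Inter>y. {u. inner (y - \<tau> y) u \<le> 0})"
  unfolding spectral_cone_def by (auto simp: inner_commute[of "_ - _"] inner_diff_right)

lemma closed_spectral_cone: "closed spectral_cone"
  unfolding spectral_cone_eq_Inter_halfspaces by (auto intro: closed_halfspace_le)

lemma convex_cone_spectral_cone: "convex_cone spectral_cone"
  unfolding spectral_cone_eq_Inter_halfspaces
  by (rule convex_cone_Inter) (auto intro: convex_cone_halfspace_le)

lemma \<gamma>_nonexpansive: "norm (\<gamma> X - \<gamma> Y) \<le> norm (X - Y)"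
  by (rule norm_diff_le_of_inner_le[OF norm_\<gamma> norm_\<gamma> inner_le_inner_\<gamma>])

lemma \<gamma>_scaleR:
  assumes "\<alpha> \<ge> 0"
  shows "\<gamma> (\<alpha> *\<^sub>R X) = \<alpha> *\<^sub>R \<gamma> X"
proof -
  obtain a where a: "a \<in> A" "X = \<Lambda> a (\<gamma> X)"
    using decomposition by blast
  then have "\<gamma> (\<alpha> *\<^sub>R X) = \<tau> (\<alpha> *\<^sub>R \<gamma> X)"
    using \<gamma>_\<Lambda> \<Lambda>_linear by (metis linear_scale)
  moreover have "\<alpha> *\<^sub>R \<gamma> X \<in> spectral_cone"
    using convex_cone_scaleR[OF convex_cone_spectral_cone assms \<gamma>_in_spectral_cone] .
  ultimately show ?thesis
    using \<tau>_fixes_spectral_cone by simp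
qed

lemma \<gamma>_uminus: "\<exists>s\<in>carrier G. \<gamma> (- X) = - act s (\<gamma> X)"
proof -
  obtain a where "a \<in> A" "X = \<Lambda> a (\<gamma> X)"
    using decomposition by blast
  then have "\<gamma> (- X) = \<tau> (- \<gamma> X)"
    using \<gamma>_\<Lambda> \<Lambda>_linear by (metis linear_neg)
  moreover obtain s where "s \<in> carrier G" "\<tau> (- \<gamma> X) = act s (- \<gamma> X)"
    using \<tau>_in_orbit[of "- \<gamma> X"] unfolding orbit_def by blast
  ultimately show ?thesis
    using act_linear by (metis linear_neg)
qed

end

theorem proposition3p5:
  fixes G :: "('s, 'm) monoid_scheme"
    and act :: "'s \<Rightarrow> 'x::euclidean_space \<Rightarrow> 'x"
    and \<gamma> :: "'h::euclidean_space \<Rightarrow> 'x"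
    and A :: "'a set"
    and \<Lambda> :: "'a \<Rightarrow> 'x \<Rightarrow> 'h"
    and \<tau> :: "'x \<Rightarrow> 'x"
  assumes sds: "spectral_decomposition_system G act \<gamma> A \<Lambda>"
    and tau: "spectral_ordering_map G act \<gamma> A \<Lambda> \<tau>"
  shows "(\<tau> \<circ> \<gamma> = \<gamma> \<and> (\<forall>a\<in>A. \<gamma> \<circ> \<Lambda> a \<circ> \<gamma> = \<gamma>))
    \<and> (range \<gamma> = range \<tau> \<and> closed (range \<gamma>) \<and> convex_cone (range \<gamma>))
    \<and> (\<forall>X. \<forall>a\<in>A. norm X = norm (\<Lambda> a (\<gamma> X)) \<and> norm (\<Lambda> a (\<gamma> X)) = norm (\<gamma> X))
    \<and> (\<forall>X Y. norm (\<gamma> X - \<gamma> Y) \<le> norm (X - Y))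
    \<and> (\<forall>X. \<forall>\<alpha>::real. \<alpha> \<ge> 0 \<longrightarrow> \<gamma> (\<alpha> *\<^sub>R X) = \<alpha> *\<^sub>R \<gamma> X)
    \<and> (\<forall>X. \<gamma> (- X) \<in> {- act s (\<gamma> X) | s. s \<in> carrier G})"
proof -
  interpret spectral_decomposition G act \<gamma> A \<Lambda> \<tau>
    using sds tau by unfold_locales
  show ?thesis
    using \<tau>_\<gamma> \<gamma>_\<Lambda>_\<gamma> range_\<gamma>_eq_range_\<tau> range_\<gamma>_eq_spectral_cone
      closed_spectral_cone convex_cone_spectral_cone norm_\<Lambda> norm_\<gamma>
      \<gamma>_nonexpansive \<gamma>_scaleR \<gamma>_uminus
    by (simp add: fun_eq_iff) blast
qed

end
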